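(* Let $P,Q$ be convex polygons in the plane, with all vertices in general position, that form a weakly disjoint pair and satisfy $P\cap Q\neq\emptyset$. Then one of $P,Q$ contains a vertex of the other.
   Context: Two convex polygons $P,Q$ form a weakly disjoint pair if $P\setminus Q$ and $Q\setminus P$ are both connected sets and $P$ and $Q$ share no vertex. The convex hull of a line segment is regarded as a valid degenerate convex polygon with two edges. *)

theory Defs
  imports "HOL-Analysis.Analysis"
begin

text \<open>A convex polygon in the plane: the convex hull of a finite set of at least two
points (so that the convex hull of a segment counts as a degenerate polygon).\<close>
definition convex_polygon :: "(real^2) set \<Rightarrow> bool" where
  "convex_polygon P \<longleftrightarrow> (\<exists>S. finite S \<and> card S \<ge> 2 \<and> P = convex hull S)"

definition vertices :: "(real^2) set \<Rightarrow> (real^2) set" where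
  "vertices P = {x. x extreme_point_of P}"

definition general_position :: "(real^2) set \<Rightarrow> bool" where
  "general_position V \<longleftrightarrow>
     (\<forall>a\<in>V. \<forall>b\<in>V. \<forall>c\<in>V. a \<noteq> b \<and> a \<noteq> c \<and> b \<noteq> c \<longrightarrow> \<not> collinear {a, b, c})"

definition weakly_disjoint :: "(real^2) set \<Rightarrow> (real^2) set \<Rightarrow> bool" where
  "weakly_disjoint P Q \<longleftrightarrow>
     connected (P - Q) \<and> connected (Q - P) \<and> vertices P \<inter> vertices Q = {}"

end

theory Submission
  imports Defs
begin

text \<open>Suppose no vertex of either polygon lies in the other. Since \<open>P\<close> meets \<open>Q\<close> without
containing a vertex of \<open>Q\<close>, it meets an edge \<open>F\<close> of \<open>Q\<close>. The chord cut from \<open>P\<close> by the line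
through \<open>F\<close> is connected, meets \<open>F\<close> and avoids both endpoints of \<open>F\<close>, so it lies inside \<open>F\<close> and
hence inside \<open>Q\<close>. The chord contains no vertex of \<open>P\<close>, so \<open>P\<close> has vertices strictly on both
sides of the line; these lie in \<open>P - Q\<close>, which misses the line, so \<open>P - Q\<close> is disconnected.\<close>

lemma convex_polygon_imp_polytope: "convex_polygon P \<Longrightarrow> polytope P"
  unfolding convex_polygon_def using polytope_convex_hull by blast

lemma rel_frontier_subset_extreme_points:
  fixes F :: "'a::euclidean_space set"
  assumes "polytope F" and "aff_dim F \<le> 1"
  shows "rel_frontier F \<subseteq> {v. v extreme_point_of F}"
proof -
  have "G \<subseteq> {v. v extreme_point_of F}" if G: "G face_of F" "G \<noteq> F" for G
  proof -
    have "aff_dim G < 1"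
      using face_of_aff_dim_lt[OF polytope_imp_convex[OF \<open>polytope F\<close>] G] assms(2) by simp
    then have "aff_dim G = -1 \<or> aff_dim G = 0"
      using aff_dim_geq[of G] by linarith
    then have "G = {} \<or> (\<exists>x. G = {x})"
      using aff_dim_empty[of G] by (simp add: aff_dim_eq_0)
    then show ?thesis
      using G(1) face_of_singleton by blast
  qed
  then show ?thesis
    unfolding rel_frontier_of_polyhedron_alt[OF polytope_imp_polyhedron[OF \<open>polytope F\<close>]] by blast
qed

lemma connected_subset_if_disjoint_rel_frontier:
  fixes C F :: "'a::euclidean_space set"
  assumes "connected C" and "C \<subseteq> affine hull F" and "closed F"
    and "C \<inter> F \<noteq> {}" and "C \<inter> rel_frontier F = {}"
  shows "C \<subseteq> F"
proof (rule ccontr)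
  assume "\<not> C \<subseteq> F"
  have F_eq_rel_interior: "C \<inter> F = C \<inter> rel_interior F"
    using assms(3,5) rel_interior_subset unfolding rel_frontier_def by auto
  have "openin (top_of_set (affine hull F)) (affine hull F \<inter> rel_interior F)"
    by (metis Int_absorb1 openin_imp_subset openin_rel_interior topspace_euclidean_subtopology)
  then have "openin (top_of_set C) (C \<inter> F)"
    unfolding F_eq_rel_interior using assms(2) by (rule openin_subtopology_Int_subset)
  moreover have "closedin (top_of_set C) (C \<inter> F)"
    using \<open>closed F\<close> by (simp add: closedin_closed_Int)
  ultimately show False
    using \<open>connected C\<close> \<open>\<not> C \<subseteq> F\<close> assms(4) unfolding connected_clopen by blast
qed

lemma extreme_point_above_hyperplane:
  fixes P :: "'a::euclidean_space set"
  assumes "compact P" and "convex P" and "P \<inter> {x. a \<bullet> x = b} \<noteq> {}"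
    and "\<And>v. v extreme_point_of P \<Longrightarrow> a \<bullet> v \<noteq> b"
  obtains v where "v extreme_point_of P" and "a \<bullet> v > b"
proof (rule ccontr)
  assume "\<not> thesis"
  with that have "{v. v extreme_point_of P} \<subseteq> {x. a \<bullet> x \<le> b}"
    using linorder_not_le by blast
  then have "P \<subseteq> {x. a \<bullet> x \<le> b}"
    using Krein_Milman_Minkowski[OF assms(1,2)] by (metis convex_halfspace_le hull_minimal)
  then have face: "P \<inter> {x. a \<bullet> x = b} face_of P"
    by (simp add: assms(2) face_of_Int_supporting_hyperplane_le subset_eq)
  have "P \<inter> {x. a \<bullet> x = b} = convex hull {v. v extreme_point_of (P \<inter> {x. a \<bullet> x = b})}"
    using Krein_Milman_Minkowski face_of_imp_compact[OF assms(2,1) face] face_of_imp_convex[OF face] .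
  then obtain v where "v extreme_point_of (P \<inter> {x. a \<bullet> x = b})"
    using assms(3) by force
  then have "v extreme_point_of P" "a \<bullet> v = b"
    using extreme_point_of_face[OF face] by auto
  then show False
    using assms(4) by blast
qed

lemma polygon_edge_meets:
  fixes Q S :: "(real^2) set"
  assumes "polytope Q" and "connected S" and "S \<inter> Q \<noteq> {}" and "S - Q \<noteq> {}"
    and "\<And>v. v extreme_point_of Q \<Longrightarrow> v \<notin> S"
  obtains F where "F face_of Q" and "aff_dim F = 1" and "F \<inter> S \<noteq> {}"
proof -
  have "convex Q"
    using \<open>polytope Q\<close> by (rule polytope_imp_convex)
  obtain G where G: "G face_of Q" "aff_dim G \<le> 1" "G \<inter> S \<noteq> {}"
  proof (cases "aff_dim Q \<le> 1")
    case True
    then show thesis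
      using that face_of_refl[OF \<open>convex Q\<close>] assms(3) by blast
  next
    case False
    then have "aff_dim Q = DIM(real^2)"
      using aff_dim_le_DIM[of Q] by simp
    then have "rel_frontier Q = frontier Q"
      using aff_dim_eq_full rel_frontier_frontier by blast
    then obtain x G where "x \<in> S" "x \<in> G" and G: "G face_of Q" "G \<noteq> Q"
      using connected_Int_frontier[OF assms(2-4)]
      unfolding rel_frontier_of_polyhedron_alt[OF polytope_imp_polyhedron[OF \<open>polytope Q\<close>]] by blast
    moreover have "aff_dim G < 2"
      using face_of_aff_dim_lt[OF \<open>convex Q\<close> G] \<open>aff_dim Q = DIM(real^2)\<close> by simp
    ultimately show thesis
      using that by fastforce
  qed
  have "aff_dim G \<noteq> 0"
    using G(1,3) assms(5) by (auto simp: aff_dim_eq_0 face_of_singleton)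
  moreover have "aff_dim G \<noteq> -1"
    using G(3) by (auto simp flip: aff_dim_empty)
  ultimately have "aff_dim G = 1"
    using G(2) aff_dim_geq[of G] by linarith
  then show thesis
    using that G(1,3) by blast
qed

lemma convex_Int_affine_hull_edge_subset:
  fixes P F :: "'a::euclidean_space set"
  assumes "convex P" and "polytope F" and "aff_dim F \<le> 1" and "P \<inter> F \<noteq> {}"
    and "\<And>v. v extreme_point_of F \<Longrightarrow> v \<notin> P"
  shows "P \<inter> affine hull F \<subseteq> F"
proof (rule connected_subset_if_disjoint_rel_frontier)
  show "connected (P \<inter> affine hull F)"
    by (simp add: assms(1) convex_Int convex_connected)
  show "closed F"
    using \<open>polytope F\<close> by (rule polytope_imp_closed)
  show "P \<inter> affine hull F \<inter> rel_frontier F = {}"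
    using rel_frontier_subset_extreme_points[OF assms(2,3)] assms(5) by blast
  show "P \<inter> affine hull F \<inter> F \<noteq> {}"
    using assms(4) hull_subset[of F affine] by blast
qed auto

lemma hyperplane_section_not_subset:
  fixes P Q :: "'a::euclidean_space set"
  assumes "compact P" and "convex P" and "connected (P - Q)"
    and "P \<inter> {x. a \<bullet> x = b} \<noteq> {}" and "\<And>v. v extreme_point_of P \<Longrightarrow> v \<notin> Q"
  shows "\<not> P \<inter> {x. a \<bullet> x = b} \<subseteq> Q"
proof
  assume section_in_Q: "P \<inter> {x. a \<bullet> x = b} \<subseteq> Q"
  then have off_hyperplane: "\<And>v. v extreme_point_of P \<Longrightarrow> a \<bullet> v \<noteq> b"
    using assms(5) extreme_point_of_def by blast
  obtain v1 where v1: "v1 extreme_point_of P" "a \<bullet> v1 > b"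
    using extreme_point_above_hyperplane[OF assms(1,2,4) off_hyperplane] .
  obtain v2 where v2: "v2 extreme_point_of P" "(-a) \<bullet> v2 > -b"
    using extreme_point_above_hyperplane[OF assms(1,2), of "-a" "-b"] assms(4) off_hyperplane
    by auto
  have "v1 \<in> P - Q" "v2 \<in> P - Q"
    using v1(1) v2(1) assms(5) extreme_point_of_def by blast+
  then obtain z where "z \<in> P - Q" "a \<bullet> z = b"
    using connected_ivt_hyperplane[OF assms(3), of v2 v1 a b] v1(2) v2(2) by auto
  then show False
    using section_in_Q by blast
qed

theorem lemma3:
  fixes P Q :: "(real^2) set"
  assumes "convex_polygon P" and "convex_polygon Q"
    and "general_position (vertices P \<union> vertices Q)"
    and "weakly_disjoint P Q"
    and "P \<inter> Q \<noteq> {}"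
  shows "(\<exists>v\<in>vertices P. v \<in> Q) \<or> (\<exists>v\<in>vertices Q. v \<in> P)"
proof (rule ccontr)
  assume "\<not> ?thesis"
  then have nP: "\<And>v. v extreme_point_of P \<Longrightarrow> v \<notin> Q"
    and nQ: "\<And>v. v extreme_point_of Q \<Longrightarrow> v \<notin> P"
    by (auto simp: vertices_def)
  have "polytope P" "polytope Q"
    using assms(1,2) by (simp_all add: convex_polygon_imp_polytope)
  then have P: "compact P" "convex P"
    by (simp_all add: polytope_imp_compact polytope_imp_convex)
  obtain v where "v extreme_point_of P"
    using Krein_Milman_Minkowski[OF P] assms(5) by force
  then have "P - Q \<noteq> {}"
    using nP extreme_point_of_def by blast
  then obtain F where F: "F face_of Q" "aff_dim F = 1" "F \<inter> P \<noteq> {}"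
    using polygon_edge_meets[OF \<open>polytope Q\<close> convex_connected[OF P(2)] _ _ nQ] assms(5) by blast
  then obtain a b where line: "affine hull F = {x. a \<bullet> x = b}"
    using aff_dim_eq_hyperplane[of F] by auto
  have "P \<inter> affine hull F \<subseteq> F"
    using convex_Int_affine_hull_edge_subset[OF P(2) face_of_polytope_polytope[OF \<open>polytope Q\<close> F(1)]]
      F extreme_point_of_face nQ by fastforce
  then have "P \<inter> {x. a \<bullet> x = b} \<subseteq> Q"
    using face_of_imp_subset[OF F(1)] unfolding line by blast
  moreover have "P \<inter> {x. a \<bullet> x = b} \<noteq> {}"
    using F(3) hull_subset[of F affine] unfolding line by blast
  ultimately show False
    using hyperplane_section_not_subset[OF P _ _ nP] assms(4) by (auto simp: weakly_disjoint_def)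
qed

end
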